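(* There exists an absolute constant $C>0$ such that the following holds. Let $d\ge 1$ and let $H=(V,E)$ be a finite $d$-uniform hypergraph with $|E|\ge 1$, one (unknown) edge $e\in E$ of which is defective. Then there is an adaptive group testing algorithm that identifies $e$, for every possible choice of $e\in E$, using at most $$\log_2|E|+2\sqrt{d\log_2|E|}+C\,d$$ tests. In particular, if $d\ge \log_2|E|$ the number of tests is $O(d)$, and if $d=o(\log_2|E|)$ it is $\log_2|E|(1+o(1))$.
   Context: Group testing on a hypergraph: $H=(V,E)$ is a finite hypergraph (each edge is a subset of the finite vertex set $V$); $H$ is $d$-uniform if every edge has exactly $d$ vertices. Exactly one edge $e\in E$ is defective and unknown. A test is an arbitrary subset $S\subseteq V$; its outcome is positive if $S\cap e\neq\emptyset$ and negative otherwise. An adaptive algorithm may choose each test depending on the outcomes of all previous tests. The algorithm must output $e$ correctly for every $e\in E$; its number of tests is the worst case over $e\in E$. *)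

theory Defs
  imports Complex_Main
begin

text \<open>An adaptive group testing algorithm is a decision tree: an internal node
  performs a test S; the algorithm continues in the first subtree if the outcome
  is positive (S meets the defective edge) and in the second one otherwise.\<close>

datatype 'a gt_tree = Output "'a set" | Test "'a set" "'a gt_tree" "'a gt_tree"

definition test_outcome :: "'a set \<Rightarrow> 'a set \<Rightarrow> bool" where
  "test_outcome S e \<longleftrightarrow> S \<inter> e \<noteq> {}"

fun gt_output :: "'a gt_tree \<Rightarrow> 'a set \<Rightarrow> 'a set" where
  "gt_output (Output f) e = f"
| "gt_output (Test S tpos tneg) e =
     (if test_outcome S e then gt_output tpos e else gt_output tneg e)"

fun gt_num_tests :: "'a gt_tree \<Rightarrow> 'a set \<Rightarrow> nat" where
  "gt_num_tests (Output f) e = 0"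
| "gt_num_tests (Test S tpos tneg) e =
     Suc (if test_outcome S e then gt_num_tests tpos e else gt_num_tests tneg e)"

definition uniform_hypergraph :: "nat \<Rightarrow> 'a set \<Rightarrow> 'a set set \<Rightarrow> bool" where
  "uniform_hypergraph d V E \<longleftrightarrow> finite V \<and> (\<forall>e\<in>E. e \<subseteq> V \<and> card e = d)"

end

theory Submission
  imports Defs
begin

text \<open>The bound holds even without the square-root term, with \<open>C = 2\<close>: order the vertices and
  identify the edge one vertex at a time. If all edges agree on the set \<open>D\<close> of vertices found so
  far, let \<open>key e\<close> be the least vertex of \<open>e - D\<close>; the test \<open>{..t} - D\<close> compares \<open>key e\<close>
  with the threshold \<open>t\<close>. A Gilbert--Moore style bisection over these keys, weighted by
  the number \<open>w\<close> of edges sharing a key, finds the key of the defective edge after \<open>s\<close> tests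
  with \<open>2^s \<cdot> w \<le> 4 |F|\<close>. Multiplying these bounds over the \<open>d\<close> rounds telescopes to
  \<open>2^tests \<le> |E| \<cdot> 4^d\<close>.\<close>

locale threshold_search =
  fixes F :: "'a set set" and key :: "'a set \<Rightarrow> 'k::linorder"
    and S :: "'k \<Rightarrow> 'a set" and Tc :: "'k \<Rightarrow> 'a gt_tree"
  assumes finite_F: "finite F"
    and test_threshold: "e \<in> F \<Longrightarrow> test_outcome (S t) e \<longleftrightarrow> key e \<le> t"
begin

definition weight :: "'k \<Rightarrow> real" where
  "weight x = real (card {e\<in>F. key e = x})"

definition weight_below :: "'k \<Rightarrow> real" where
  "weight_below x = real (card {e\<in>F. key e < x})"

text \<open>Key \<open>x\<close> owns the interval \<open>[2 weight_below x, 2 weight_below x + 2 weight x)\<close> of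
  \<open>[0, 2 |F|)\<close>, and \<open>mid x\<close> is its midpoint; bisection acts on these midpoints.\<close>

definition mid :: "'k \<Rightarrow> real" where
  "mid x = 2 * weight_below x + weight x"

lemma weight_nonneg: "0 \<le> weight x"
  by (simp add: weight_def)

lemma weight_key_ge_1: "e \<in> F \<Longrightarrow> 1 \<le> weight (key e)"
  using finite_F by (auto simp: weight_def Suc_le_eq card_gt_0_iff)

lemma weight_below_add_weight: "weight_below x + weight x = card {e\<in>F. key e \<le> x}"
proof -
  have "card ({e\<in>F. key e < x} \<union> {e\<in>F. key e = x})
      = card {e\<in>F. key e < x} + card {e\<in>F. key e = x}"
    using finite_F by (intro card_Un_disjoint) auto
  moreover have "{e\<in>F. key e < x} \<union> {e\<in>F. key e = x} = {e\<in>F. key e \<le> x}"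
    by auto
  ultimately show ?thesis
    unfolding weight_below_def weight_def by simp
qed

lemma weight_below_add_weight_le_card: "weight_below x + weight x \<le> card F"
  unfolding weight_below_add_weight using finite_F by (simp add: card_mono)

lemma weight_below_add_weight_le:
  assumes "x < y"
  shows "weight_below x + weight x \<le> weight_below y"
proof -
  have "real (card {e\<in>F. key e \<le> x}) \<le> card {e\<in>F. key e < y}"
    using finite_F assms by (intro of_nat_mono card_mono) auto
  then show ?thesis
    using weight_below_add_weight[of x] unfolding weight_below_def by linarith
qed

lemma mid_gap: "x < y \<Longrightarrow> mid x + weight x + weight y \<le> mid y"
  using weight_below_add_weight_le unfolding mid_def by fastforce

lemma mid_mono: "x \<le> y \<Longrightarrow> mid x \<le> mid y"
  using mid_gap[of x y] weight_nonneg[of x] weight_nonneg[of y]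
  by (cases "x < y") (auto simp: not_less antisym)

lemma less_if_mid_less: "mid x < mid y \<Longrightarrow> x < y"
  using mid_mono[of y x] by force

lemma weight_add_weight_less_window:
  assumes "e \<in> F" "e' \<in> F" "key e \<noteq> key e'"
    and "mid (key e) \<in> {al..<al+l}" "mid (key e') \<in> {al..<al+l}"
  shows "weight (key e) + weight (key e') < l"
  using assms(3-5) mid_gap[of "key e" "key e'"] mid_gap[of "key e'" "key e"]
  by (cases "key e" "key e'" rule: linorder_cases) auto

definition searches :: "real \<Rightarrow> real \<Rightarrow> 'a gt_tree \<Rightarrow> bool" where
  "searches al l T \<longleftrightarrow> (\<forall>e\<in>F. mid (key e) \<in> {al..<al+l} \<longrightarrow>
     gt_output T e = gt_output (Tc (key e)) e \<and>
     (\<exists>s. gt_num_tests T e = s + gt_num_tests (Tc (key e)) e \<and>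
          2 ^ s * weight (key e) \<le> max (weight (key e)) (2 * l)))"

lemma searches_short:
  assumes "l \<le> 2"
  shows "\<exists>T. searches al l T"
proof (cases "\<exists>e0\<in>F. mid (key e0) \<in> {al..<al+l}")
  case True
  then obtain e0 where e0: "e0 \<in> F" "mid (key e0) \<in> {al..<al+l}" by blast
  have "key e = key e0" if "e \<in> F" "mid (key e) \<in> {al..<al+l}" for e
    using weight_add_weight_less_window[OF that(1) e0(1) _ that(2) e0(2)]
      weight_key_ge_1[OF that(1)] weight_key_ge_1[OF e0(1)] assms by fastforce
  then have "searches al l (Tc (key e0))"
    unfolding searches_def by (auto intro!: exI[of _ 0])
  then show ?thesis ..
next
  case False
  then have "searches al l (Tc undefined)"
    unfolding searches_def by blast
  then show ?thesis ..
qed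

lemma searches_mono:
  assumes "searches al' l' T" "l' \<le> l"
    and "\<And>e. e \<in> F \<Longrightarrow> mid (key e) \<in> {al..<al+l} \<Longrightarrow> mid (key e) \<in> {al'..<al'+l'}"
  shows "searches al l T"
  unfolding searches_def
proof (intro ballI impI)
  fix e assume e: "e \<in> F" "mid (key e) \<in> {al..<al+l}"
  have "max (weight (key e)) (2 * l') \<le> max (weight (key e)) (2 * l)"
    using assms(2) by auto
  then show "gt_output T e = gt_output (Tc (key e)) e \<and>
     (\<exists>s. gt_num_tests T e = s + gt_num_tests (Tc (key e)) e \<and>
          2 ^ s * weight (key e) \<le> max (weight (key e)) (2 * l))"
    using assms(1) e assms(3)[OF e] unfolding searches_def by (meson order_trans)
qed

lemma searches_test:
  assumes T1: "searches al h T1" and T2: "searches (al+h) h T2"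
    and e1: "e1 \<in> F" "mid (key e1) \<in> {al..<al+h}"
    and e2: "e2 \<in> F" "mid (key e2) \<in> {al+h..<al+h+h}"
  defines "t \<equiv> Max (key ` {e\<in>F. mid (key e) \<in> {al..<al+h}})"
  shows "searches al (2*h) (Test (S t) T1 T2)"
  unfolding searches_def
proof (intro ballI impI)
  fix e assume e: "e \<in> F" "mid (key e) \<in> {al..<al+2*h}"
  let ?A1 = "{e\<in>F. mid (key e) \<in> {al..<al+h}}"
  have "t \<in> key ` ?A1"
    unfolding t_def using finite_F e1 by (intro Max_in) auto
  then obtain e' where e': "e' \<in> F" "mid (key e') \<in> {al..<al+h}" "t = key e'" by auto
  have outcome: "test_outcome (S t) e \<longleftrightarrow> mid (key e) < al + h"
  proof
    assume "test_outcome (S t) e"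
    then have "key e \<le> key e'" using test_threshold[OF e(1)] e'(3) by simp
    then have "mid (key e) \<le> mid (key e')" by (rule mid_mono)
    then show "mid (key e) < al + h" using e'(2) by simp
  next
    assume "mid (key e) < al + h"
    then have "key e \<le> t"
      unfolding t_def using finite_F e by (intro Max_ge) auto
    then show "test_outcome (S t) e" using test_threshold[OF e(1)] by simp
  qed
  have weight_le: "weight (key e) \<le> 2 * h"
  proof (cases "mid (key e) < al + h")
    case True
    then have "key e \<noteq> key e2" using e2(2) by auto
    moreover have "mid (key e2) \<in> {al..<al+2*h}" using e1(2) e2(2) by auto
    ultimately show ?thesis
      using weight_add_weight_less_window[OF e(1) e2(1) _ e(2)] weight_nonneg[of "key e2"]
      by linarith
  next
    case False
    then have "key e \<noteq> key e1" using e1(2) by auto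
    moreover have "mid (key e1) \<in> {al..<al+2*h}" using e1(2) by auto
    ultimately show ?thesis
      using weight_add_weight_less_window[OF e(1) e1(1) _ e(2)] weight_nonneg[of "key e1"]
      by linarith
  qed
  define T' where "T' = (if mid (key e) < al + h then T1 else T2)"
  obtain s where s: "gt_output T' e = gt_output (Tc (key e)) e"
      "gt_num_tests T' e = s + gt_num_tests (Tc (key e)) e"
      "2 ^ s * weight (key e) \<le> max (weight (key e)) (2 * h)"
    using T1 T2 e unfolding searches_def T'_def
    by (cases "mid (key e) < al + h") (auto simp: add.assoc)
  \<comment> \<open>as weight \<le> 2 h, the bound inherited from the half window is 2 h, and one more test doubles it\<close>
  have "2 ^ Suc s * weight (key e) \<le> max (weight (key e)) (2 * (2 * h))"
    using s(3) weight_le weight_nonneg[of "key e"] by (auto simp: max_def)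
  then show "gt_output (Test (S t) T1 T2) e = gt_output (Tc (key e)) e \<and>
     (\<exists>s. gt_num_tests (Test (S t) T1 T2) e = s + gt_num_tests (Tc (key e)) e \<and>
          2 ^ s * weight (key e) \<le> max (weight (key e)) (2 * (2 * h)))"
    using s outcome unfolding T'_def by (intro conjI exI[of _ "Suc s"]) (simp_all split: if_splits)
qed

lemma searches_bisect:
  assumes T1: "searches al h T1" and T2: "searches (al+h) h T2" and h: "0 < h"
  shows "\<exists>T. searches al (2*h) T"
proof (cases "\<exists>e1\<in>F. mid (key e1) \<in> {al..<al+h}")
  case first: True
  show ?thesis
  proof (cases "\<exists>e2\<in>F. mid (key e2) \<in> {al+h..<al+h+h}")
    case True
    with first show ?thesis using searches_test[OF T1 T2] by blast
  next
    case False
    then have "searches al (2*h) T1"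
      using h by (intro searches_mono[OF T1]) auto
    then show ?thesis ..
  qed
next
  case False
  then have "searches al (2*h) T2"
    using h by (intro searches_mono[OF T2]) auto
  then show ?thesis ..
qed

lemma searches_exists:
  assumes "0 < l"
  shows "\<exists>T. searches al l T"
proof -
  obtain n where "l < 2 ^ n"
    using real_arch_pow[of 2 l] by auto
  with assms show ?thesis
  proof (induction n arbitrary: al l)
    case 0
    then show ?case by (intro searches_short) simp
  next
    case (Suc n)
    then have "0 < l/2" "l/2 < 2 ^ n"
      by simp_all
    then obtain T1 T2 where "searches al (l/2) T1" "searches (al + l/2) (l/2) T2"
      using Suc.IH by blast
    then show ?case
      using searches_bisect[of al "l/2"] Suc.prems(1) by simp
  qed
qed

theorem threshold_search_tree:
  "\<exists>T. \<forall>e\<in>F. gt_output T e = gt_output (Tc (key e)) e \<and>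
     (\<exists>s. gt_num_tests T e = s + gt_num_tests (Tc (key e)) e \<and>
          2 ^ s * weight (key e) \<le> 4 * card F)"
proof (cases "F = {}")
  case False
  then have "0 < 2 * real (card F)"
    using finite_F by (simp add: card_gt_0_iff)
  then obtain T where T: "searches 0 (2 * real (card F)) T"
    using searches_exists by blast
  have "mid (key e) \<in> {0..<0 + 2 * card F}" "max (weight (key e)) (2 * (2 * card F)) = 4 * card F"
    if "e \<in> F" for e
    using weight_below_add_weight_le_card[of "key e"] weight_key_ge_1[OF that]
      weight_nonneg[of "key e"] of_nat_0_le_iff[of "card {e'\<in>F. key e' < key e}"]
    unfolding mid_def weight_below_def by auto
  with T show ?thesis
    unfolding searches_def by (intro exI[of _ T] ballI) simp
qed simp

corollary identifying_tree:
  fixes B :: real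
  assumes "\<And>e. e \<in> F \<Longrightarrow>
    gt_output (Tc (key e)) e = e \<and> 2 ^ gt_num_tests (Tc (key e)) e \<le> weight (key e) * B"
  shows "\<exists>T. \<forall>e\<in>F. gt_output T e = e \<and> 2 ^ gt_num_tests T e \<le> card F * (4 * B)"
proof -
  obtain T where T: "\<forall>e\<in>F. gt_output T e = gt_output (Tc (key e)) e \<and>
     (\<exists>s. gt_num_tests T e = s + gt_num_tests (Tc (key e)) e \<and>
          2 ^ s * weight (key e) \<le> 4 * card F)"
    using threshold_search_tree by blast
  have "gt_output T e = e \<and> 2 ^ gt_num_tests T e \<le> card F * (4 * B)" if e: "e \<in> F" for e
  proof -
    obtain s where s: "gt_output T e = gt_output (Tc (key e)) e"
        "gt_num_tests T e = s + gt_num_tests (Tc (key e)) e"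
        "2 ^ s * weight (key e) \<le> 4 * card F"
      using T e by blast
    note tc = assms[OF e]
    have "2 ^ s * 2 ^ gt_num_tests (Tc (key e)) e * weight (key e)
        \<le> (4 * card F) * (weight (key e) * B)"
      using mult_mono[OF s(3) conjunct2[OF tc]] weight_nonneg[of "key e"] by (simp add: mult_ac)
    then have "2 ^ gt_num_tests T e * weight (key e) \<le> (card F * (4 * B)) * weight (key e)"
      unfolding s(2) by (simp add: power_add mult_ac)
    then show ?thesis
      using s(1) tc weight_key_ge_1[OF e] by simp
  qed
  then show ?thesis by blast
qed

end

lemma test_outcome_atMost_diff:
  fixes e D :: "'a::linorder set"
  assumes "finite (e - D)" "e - D \<noteq> {}"
  shows "test_outcome ({..t} - D) e \<longleftrightarrow> Min (e - D) \<le> t"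
proof
  assume "test_outcome ({..t} - D) e"
  then obtain y where "y \<in> e - D" "y \<le> t"
    unfolding test_outcome_def by auto
  then show "Min (e - D) \<le> t"
    using Min_le[OF assms(1)] order_trans by blast
next
  assume "Min (e - D) \<le> t"
  then show "test_outcome ({..t} - D) e"
    using Min_in[OF assms] unfolding test_outcome_def by auto
qed

lemma identifying_tree_exists:
  fixes F :: "'a::linorder set set" and D :: "'a set"
  assumes "finite F" "F \<noteq> {}" "\<And>e. e \<in> F \<Longrightarrow> finite e"
    and "\<And>e e'. e \<in> F \<Longrightarrow> e' \<in> F \<Longrightarrow> e \<inter> D = e' \<inter> D"
    and "\<And>e. e \<in> F \<Longrightarrow> card (e - D) = k"
  shows "\<exists>T. \<forall>e\<in>F. gt_output T e = e \<and> 2 ^ gt_num_tests T e \<le> real (card F) * 4 ^ k"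
  using assms
proof (induction k arbitrary: F D)
  case 0
  then obtain e0 where e0: "e0 \<in> F" by blast
  have "e = e0" if "e \<in> F" for e
    using "0.prems"(3-5)[OF that] "0.prems"(3-5)[OF e0] "0.prems"(4)[OF that e0] by auto
  moreover have "1 \<le> real (card F)"
    using "0.prems"(1,2) by (simp add: Suc_le_eq card_gt_0_iff)
  ultimately show ?case
    by (intro exI[of _ "Output e0"]) auto
next
  case (Suc k)
  have fin: "finite (e - D)" and ne: "e - D \<noteq> {}" if "e \<in> F" for e
    using Suc.prems(3,5)[OF that] by (simp, metis card.empty nat.distinct(1))
  define key where "key e = Min (e - D)" for e :: "'a set"
  have key_in: "key e \<in> e - D" if "e \<in> F" for e
    unfolding key_def using Min_in[OF fin[OF that] ne[OF that]] .
  have "\<forall>x\<in>key ` F. \<exists>T. \<forall>e\<in>{e\<in>F. key e = x}. gt_output T e = e \<and>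
      2 ^ gt_num_tests T e \<le> real (card {e\<in>F. key e = x}) * 4 ^ k"
  proof
    fix x assume x: "x \<in> key ` F"
    show "\<exists>T. \<forall>e\<in>{e\<in>F. key e = x}. gt_output T e = e \<and>
      2 ^ gt_num_tests T e \<le> real (card {e\<in>F. key e = x}) * 4 ^ k"
    proof (rule Suc.IH[where D = "insert x D"])
      fix e e' assume e: "e \<in> {e\<in>F. key e = x}" and e': "e' \<in> {e\<in>F. key e = x}"
      then have "x \<in> e" "x \<in> e'" and "e \<inter> D = e' \<inter> D"
        using key_in[of e] key_in[of e'] Suc.prems(4)[of e e'] by auto
      then show "e \<inter> insert x D = e' \<inter> insert x D"
        by auto
    next
      fix e assume e: "e \<in> {e\<in>F. key e = x}"
      then have "e - insert x D = (e - D) - {x}" and "x \<in> e - D"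
        using key_in by auto
      then show "card (e - insert x D) = k"
        using Suc.prems(5) e by simp
    qed (use Suc.prems(1,3) x in auto)
  qed
  then obtain Tc where Tc: "\<forall>x\<in>key ` F. \<forall>e\<in>{e\<in>F. key e = x}. gt_output (Tc x) e = e \<and>
      2 ^ gt_num_tests (Tc x) e \<le> real (card {e\<in>F. key e = x}) * 4 ^ k"
    by (rule bchoice[THEN exE])
  interpret threshold_search F key "\<lambda>t. {..t} - D" Tc
    using Suc.prems(1) test_outcome_atMost_diff[OF fin ne] unfolding key_def
    by unfold_locales simp_all
  have "\<exists>T. \<forall>e\<in>F. gt_output T e = e \<and> 2 ^ gt_num_tests T e \<le> real (card F) * (4 * 4 ^ k)"
    using Tc by (intro identifying_tree) (auto simp: weight_def)
  then show ?case
    by simp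
qed

lemma log2_le_of_pow2_le:
  fixes m :: real
  assumes "0 < m" "2 ^ n \<le> m * 4 ^ k"
  shows "real n \<le> log 2 m + 2 * real k"
proof -
  have "real n = log 2 (2 ^ n)"
    by (simp add: log_nat_power)
  also have "\<dots> \<le> log 2 (m * 4 ^ k)"
    using assms by (subst log_le_cancel_iff) auto
  also have "\<dots> = log 2 m + 2 * real k"
    using assms(1) log_pow_cancel[of 2 2] by (simp add: log_mult log_nat_power)
  finally show ?thesis .
qed

theorem theorem1:
  shows "\<exists>C::real. C > 0 \<and>
    (\<forall>(d::nat) (V::nat set) (E::nat set set).
       d \<ge> 1 \<longrightarrow> uniform_hypergraph d V E \<longrightarrow> card E \<ge> 1 \<longrightarrow>
       (\<exists>T::nat gt_tree. \<forall>e\<in>E.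
          gt_output T e = e \<and>
          real (gt_num_tests T e) \<le>
            log 2 (card E) + 2 * sqrt (real d * log 2 (card E)) + C * real d))"
proof (intro exI[of _ 2] conjI allI impI)
  fix d :: nat and V :: "nat set" and E :: "nat set set"
  assume H: "uniform_hypergraph d V E" and E: "card E \<ge> 1"
  have edges: "e \<subseteq> V" "card e = d" if "e \<in> E" for e
    using H that unfolding uniform_hypergraph_def by auto
  have "finite V"
    using H unfolding uniform_hypergraph_def by simp
  then have fin: "finite E" "\<And>e. e \<in> E \<Longrightarrow> finite e"
    using edges(1) by (auto intro: finite_subset[of E "Pow V"] finite_subset)
  moreover have "E \<noteq> {}"
    using E by auto
  ultimately have "\<exists>T. \<forall>e\<in>E. gt_output T e = e \<and> 2 ^ gt_num_tests T e \<le> real (card E) * 4 ^ d"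
    using identifying_tree_exists[of E "{}" d] edges(2) by simp
  then obtain T where T: "\<forall>e\<in>E. gt_output T e = e \<and> 2 ^ gt_num_tests T e \<le> real (card E) * 4 ^ d"
    by blast
  show "\<exists>T. \<forall>e\<in>E. gt_output T e = e \<and>
      real (gt_num_tests T e) \<le> log 2 (card E) + 2 * sqrt (real d * log 2 (card E)) + 2 * real d"
  proof (intro exI[of _ T] ballI conjI)
    fix e assume "e \<in> E"
    then show "gt_output T e = e"
      using T by simp
    have "real (gt_num_tests T e) \<le> log 2 (card E) + 2 * real d"
      using T \<open>e \<in> E\<close> E by (intro log2_le_of_pow2_le) auto
    moreover have "0 \<le> sqrt (real d * log 2 (card E))"
      using E by simp
    ultimately show "real (gt_num_tests T e) \<le>
        log 2 (card E) + 2 * sqrt (real d * log 2 (card E)) + 2 * real d"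
      by linarith
  qed
qed simp

end
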